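(* Let $n\ge2$, $m\ge1$, $\lambda_0\ne0$, $\lambda_1>0$, $\lambda_2\ge0$, $\omega\in\mathbb{R}$, let $f=\frac1n\sum_{i=1}^n r_i(\cdot;\lambda_0,\lambda_1,\lambda_2,m,\omega)$, and assume $f$ attains its minimum $f^*$ on $\mathbb{R}^m$. Consider a PIFO algorithm with initial point $x_0=0$ and sampling probabilities satisfying $p_1\le p_2\le\dots\le p_n$, run on the components $f_i=r_i(\cdot;\lambda_0,\lambda_1,\lambda_2,m,\omega)$. Let $\varepsilon>0$ and let $M\ge1$ be an integer such that $\min_{x\in\mathcal{F}_M}f(x)-f^*\ge9\varepsilon$, and set $N=n(M+1)/4$. Then $\mathbb{E} f(x_t)-f^*\ge\varepsilon$ for every integer $0\le t\le N$.
   Context: For $\omega\in\mathbb{R}$, $B(m,\omega)\in\mathbb{R}^{m\times m}$ is the matrix whose row $l$, for $1\le l\le m-1$, has entry $-1$ in column $m-l$ and entry $1$ in column $m-l+1$, and whose row $m$ is $\omega e_1^\top$; $b_l(m,\omega)^\top$ is its $l$-th row. $\mathcal{L}_i=\{l:1\le l\le m,\ l\equiv i-1\pmod n\}$. $r_1(x)=\lambda_1\sum_{l\in\mathcal{L}_1}(b_l(m,\omega)^\top x)^2+\lambda_2\|x\|_2^2-\lambda_0\langle e_m,x\rangle$ and $r_i(x)=\lambda_1\sum_{l\in\mathcal{L}_i}(b_l(m,\omega)^\top x)^2+\lambda_2\|x\|_2^2$ for $i\ge2$, $x\in\mathbb{R}^m$. $\mathcal{F}_0=\{0\}$, $\mathcal{F}_k=\mathrm{span}\{e_m,\dots,e_{m-k+1}\}$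 for $1\le k\le m$. For $\gamma>0$, $\mathrm{prox}^{\gamma}_g(x)=\arg\min_u\{g(u)+\frac{1}{2\gamma}\|x-u\|_2^2\}$. PIFO algorithm: a probability vector $(p_1,\dots,p_n)$, initial point $x_0$, parameters $\gamma_t>0$; indices $i_1,i_2,\dots$ drawn independently with $\mathbb{P}(i_t=j)=p_j$; iterates $x_t\in\mathrm{span}\{x_0,\dots,x_{t-1},\nabla f_{i_1}(x_0),\dots,\nabla f_{i_t}(x_{t-1}),\mathrm{prox}^{\gamma_1}_{f_{i_1}}(x_0),\dots,\mathrm{prox}^{\gamma_t}_{f_{i_t}}(x_{t-1})\}$ for $t\ge1$. *)

theory Defs
  imports "HOL-Analysis.Analysis"
begin

text \<open>Vectors of R^m are elements of real^'m with m = CARD('m); the coordinate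
  labelled k (1 <= k <= m) is ix k, for a bijection ix from {1..m} onto the index type.\<close>

definition evec :: "(nat \<Rightarrow> 'm::finite) \<Rightarrow> nat \<Rightarrow> real^'m" where
  "evec ix k = axis (ix k) 1"

definition brow :: "(nat \<Rightarrow> 'm::finite) \<Rightarrow> real \<Rightarrow> nat \<Rightarrow> real^'m" where
  "brow ix \<omega> l =
     (if l < CARD('m) then evec ix (CARD('m) - l + 1) - evec ix (CARD('m) - l)
      else \<omega> *\<^sub>R evec ix 1)"

definition Lset :: "nat \<Rightarrow> nat \<Rightarrow> nat \<Rightarrow> nat set" where
  "Lset m n i = {l. 1 \<le> l \<and> l \<le> m \<and> l mod n = (i - 1) mod n}"

definition rfun :: "(nat \<Rightarrow> 'm::finite) \<Rightarrow> nat \<Rightarrow> real \<Rightarrow> real \<Rightarrow> real \<Rightarrow> real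
                    \<Rightarrow> nat \<Rightarrow> real^'m \<Rightarrow> real" where
  "rfun ix n la0 la1 la2 \<omega> i x =
     la1 * (\<Sum>l\<in>Lset CARD('m) n i. (brow ix \<omega> l \<bullet> x)^2) + la2 * (norm x)^2
     - (if i = 1 then la0 * (evec ix CARD('m) \<bullet> x) else 0)"

definition Fsp :: "(nat \<Rightarrow> 'm::finite) \<Rightarrow> nat \<Rightarrow> (real^'m) set" where
  "Fsp ix k = span (evec ix ` {CARD('m) - k + 1 .. CARD('m)})"

definition grad :: "(real^'m \<Rightarrow> real) \<Rightarrow> real^'m \<Rightarrow> real^'m" where
  "grad g x = (THE D. GDERIV g x :> D)"

definition prox :: "real \<Rightarrow> (real^'m \<Rightarrow> real) \<Rightarrow> real^'m \<Rightarrow> real^'m" where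
  "prox \<gamma> g x = (THE u. \<forall>v. g u + (1 / (2 * \<gamma>)) * (norm (x - u))^2
                             \<le> g v + (1 / (2 * \<gamma>)) * (norm (x - v))^2)"

text \<open>A PIFO algorithm with initial point 0: the iterate after the sampled indices
  s = [i_1,...,i_t] is x s; it only depends on the indices sampled so far.\<close>
definition PIFO :: "(nat \<Rightarrow> real^'m \<Rightarrow> real) \<Rightarrow> nat \<Rightarrow> (nat \<Rightarrow> real)
                    \<Rightarrow> (nat list \<Rightarrow> real^'m) \<Rightarrow> bool" where
  "PIFO fc n \<gamma> x \<longleftrightarrow> x [] = 0 \<and> (\<forall>t\<ge>1. \<gamma> t > 0) \<and>
     (\<forall>s. s \<noteq> [] \<and> set s \<subseteq> {1..n} \<longrightarrow>
        x s \<in> span ((\<lambda>k. x (take k s)) ` {..<length s}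
                    \<union> (\<lambda>k. grad (fc (s ! k)) (x (take k s))) ` {..<length s}
                    \<union> (\<lambda>k. prox (\<gamma> (Suc k)) (fc (s ! k)) (x (take k s))) ` {..<length s}))"

text \<open>Expectation of g(x_t) when i_1,...,i_t are i.i.d. with P(i=j) = p j.\<close>
definition expect_iter :: "nat \<Rightarrow> (nat \<Rightarrow> real) \<Rightarrow> (nat list \<Rightarrow> 'a) \<Rightarrow> ('a \<Rightarrow> real) \<Rightarrow> nat \<Rightarrow> real" where
  "expect_iter n p x g t = (\<Sum>s\<in>{s. length s = t \<and> set s \<subseteq> {1..n}}. prod_list (map p s) * g (x s))"

end

theory Submission
  imports Defs
begin

text \<open>Started at \<open>0\<close>, a gradient or proximal step for \<open>r\<^sub>i\<close> at a point of \<open>\<F>\<^sub>k\<close> lands in \<open>\<F>\<^sub>k\<^sub>+\<^sub>1\<close>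
  if row \<open>k\<close> of \<open>B\<close> belongs to \<open>\<L>\<^sub>i\<close>, and stays in \<open>\<F>\<^sub>k\<close> otherwise: no row of \<open>r\<^sub>i\<close> then couples
  \<open>\<F>\<^sub>k\<close> to the remaining coordinates, so the gradient has no component there and projecting onto
  \<open>\<F>\<^sub>k\<close> can only improve the proximal objective. Hence \<open>x\<^sub>t \<in> \<F>\<^sub>K\<close>, where the progress \<open>K\<close>
  advances from \<open>j\<close> only if index \<open>j mod n + 1\<close> is sampled. Charging \<open>1 / p (j mod n + 1)\<close> for that
  advance, the expected charge after \<open>t\<close> steps is at most \<open>t\<close>, while reaching \<open>M\<close> costs at least
  \<open>nM\<close> because \<open>1/q \<ge> 2n - n\<^sup>2q\<close> and sorted probabilities are hit cheapest first. By Markov's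
  inequality \<open>K < M\<close> with probability at least \<open>1/2\<close> for \<open>t \<le> n(M+1)/4\<close>, and then
  \<open>f(x\<^sub>t) - f\<^sup>* \<ge> 9\<epsilon>\<close>.\<close>

section \<open>Expectations over sampled index sequences\<close>

definition index_seqs :: "nat \<Rightarrow> nat \<Rightarrow> nat list set" where
  "index_seqs n t = {s. length s = t \<and> set s \<subseteq> {1..n}}"

definition seq_expect :: "nat \<Rightarrow> (nat \<Rightarrow> real) \<Rightarrow> nat \<Rightarrow> (nat list \<Rightarrow> real) \<Rightarrow> real" where
  "seq_expect n p t g = (\<Sum>s\<in>index_seqs n t. prod_list (map p s) * g s)"

lemma expect_iter_eq_seq_expect: "expect_iter n p x g t = seq_expect n p t (\<lambda>s. g (x s))"
  unfolding expect_iter_def seq_expect_def index_seqs_def ..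

lemma index_seqs_0: "index_seqs n 0 = {[]}"
  unfolding index_seqs_def by auto

lemma index_seqs_Suc: "index_seqs n (Suc t) = (\<lambda>(s, i). s @ [i]) ` (index_seqs n t \<times> {1..n})"
proof (intro equalityI subsetI)
  fix s assume s: "s \<in> index_seqs n (Suc t)"
  then have "s \<noteq> []"
    unfolding index_seqs_def by auto
  then have "s = butlast s @ [last s]"
    by simp
  moreover from s \<open>s \<noteq> []\<close> have "(butlast s, last s) \<in> index_seqs n t \<times> {1..n}"
    unfolding index_seqs_def by (auto dest: in_set_butlastD last_in_set)
  ultimately show "s \<in> (\<lambda>(s, i). s @ [i]) ` (index_seqs n t \<times> {1..n})"
    by (metis (no_types, lifting) case_prod_conv image_eqI)
qed (auto simp: index_seqs_def)

lemma seq_expect_0: "seq_expect n p 0 g = g []"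
  unfolding seq_expect_def index_seqs_0 by simp

lemma seq_expect_Suc:
  "seq_expect n p (Suc t) g = seq_expect n p t (\<lambda>s. \<Sum>i=1..n. p i * g (s @ [i]))"
proof -
  have "inj_on (\<lambda>(s, i). s @ [i]) (index_seqs n t \<times> {1..n})"
    by (auto simp: inj_on_def)
  then have "seq_expect n p (Suc t) g
      = (\<Sum>(s, i)\<in>index_seqs n t \<times> {1..n}. prod_list (map p s) * (p i * g (s @ [i])))"
    unfolding seq_expect_def index_seqs_Suc
    by (subst sum.reindex) (auto simp: case_prod_beta mult_ac)
  then show ?thesis
    unfolding seq_expect_def sum.cartesian_product[symmetric] by (simp add: sum_distrib_left)
qed

lemma seq_expect_mono:
  assumes "\<forall>j\<in>{1..n}. 0 \<le> p j" and "\<And>s. s \<in> index_seqs n t \<Longrightarrow> g s \<le> h s"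
  shows "seq_expect n p t g \<le> seq_expect n p t h"
  unfolding seq_expect_def
proof (intro sum_mono mult_left_mono)
  fix s assume "s \<in> index_seqs n t"
  then show "g s \<le> h s" "0 \<le> prod_list (map p s)"
    using assms unfolding index_seqs_def by (force intro!: prod_list_nonneg)+
qed

lemma seq_expect_linear:
  "seq_expect n p t (\<lambda>s. a * g s + b * h s) = a * seq_expect n p t g + b * seq_expect n p t h"
  unfolding seq_expect_def by (simp add: sum.distrib sum_distrib_left algebra_simps)

lemma seq_expect_cmult: "seq_expect n p t (\<lambda>s. c * g s) = c * seq_expect n p t g"
  unfolding seq_expect_def by (simp add: sum_distrib_left mult_ac)

lemma seq_expect_const:
  assumes "(\<Sum>j=1..n. p j) = 1"
  shows "seq_expect n p t (\<lambda>_. c) = c"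
proof (induction t)
  case (Suc t)
  then show ?case
    using assms unfolding seq_expect_Suc by (simp add: sum_distrib_right[symmetric])
qed (simp add: seq_expect_0)

lemma seq_expect_foldl_le:
  assumes p: "\<forall>j\<in>{1..n}. 0 \<le> p j" "(\<Sum>j=1..n. p j) = 1"
    and drift: "\<And>k. (\<Sum>i=1..n. p i * \<Phi> (step k i)) \<le> \<Phi> k + d"
  shows "seq_expect n p t (\<lambda>s. \<Phi> (foldl step k\<^sub>0 s)) \<le> \<Phi> k\<^sub>0 + d * real t"
proof (induction t)
  case (Suc t)
  have "seq_expect n p (Suc t) (\<lambda>s. \<Phi> (foldl step k\<^sub>0 s))
      \<le> seq_expect n p t (\<lambda>s. 1 * \<Phi> (foldl step k\<^sub>0 s) + d * 1)"
    unfolding seq_expect_Suc using p(1) drift by (intro seq_expect_mono) simp_all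
  also have "\<dots> = seq_expect n p t (\<lambda>s. \<Phi> (foldl step k\<^sub>0 s)) + d"
    unfolding seq_expect_linear seq_expect_const[OF p(2)] by simp
  finally show ?case
    using Suc by (simp add: algebra_simps)
qed (simp add: seq_expect_0)

lemma seq_expect_ge_gap:
  assumes p: "\<forall>j\<in>{1..n}. 0 \<le> p j" "(\<Sum>j=1..n. p j) = 1"
    and low: "\<And>s. s \<in> index_seqs n t \<Longrightarrow> b \<le> g s"
    and gap: "\<And>s. s \<in> index_seqs n t \<Longrightarrow> \<not> Q s \<Longrightarrow> b + c \<le> g s"
    and "0 \<le> c"
  shows "b + c * (1 - seq_expect n p t (\<lambda>s. of_bool (Q s))) \<le> seq_expect n p t g"
proof -
  have "seq_expect n p t (\<lambda>s. (- c) * of_bool (Q s) + (b + c) * 1) \<le> seq_expect n p t g"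
    using p(1) low gap \<open>0 \<le> c\<close> by (intro seq_expect_mono) auto
  then show ?thesis
    unfolding seq_expect_linear seq_expect_const[OF p(2)] by (simp add: algebra_simps)
qed

section \<open>Progress and its potential\<close>

text \<open>\<open>progress n s\<close> is the number \<open>k\<close> of trailing coordinates that the iterates may occupy after
  the indices \<open>s\<close> were sampled. Sampling \<open>i\<close> extends it exactly when row \<open>k\<close> of \<open>B\<close> belongs to
  \<open>\<L>\<^sub>i\<close> (for \<open>k = 0\<close>: when \<open>i = 1\<close>, whose linear term lives on \<open>e\<^sub>m\<close>).\<close>

definition progress_step :: "nat \<Rightarrow> nat \<Rightarrow> nat \<Rightarrow> nat" where
  "progress_step n k i = (if i - 1 = k mod n then Suc k else k)"

definition progress :: "nat \<Rightarrow> nat list \<Rightarrow> nat" where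
  "progress n s = foldl (progress_step n) 0 s"

lemma le_progress_step: "k \<le> progress_step n k i"
  unfolding progress_step_def by auto

lemma progress_step_1_pos: "1 \<le> progress_step n k 1"
  unfolding progress_step_def by (cases k) auto

lemma progress_snoc: "progress n (s @ [i]) = progress_step n (progress n s) i"
  unfolding progress_def by simp

lemma progress_take_le: "progress n (take k s) \<le> progress n s"
proof -
  have "a \<le> foldl (progress_step n) a s" for a s
    by (induction s arbitrary: a) (auto intro: order_trans[OF le_progress_step])
  then show ?thesis
    unfolding progress_def by (metis append_take_drop_id foldl_append)
qed

lemma sorted_prefix_sum_le:
  fixes p :: "nat \<Rightarrow> real"
  assumes mono: "\<forall>j. 1 \<le> j \<and> j < n \<longrightarrow> p j \<le> p (Suc j)" and "b \<le> n"
  shows "real n * (\<Sum>j=1..b. p j) \<le> real b * (\<Sum>j=1..n. p j)"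
proof (cases "b = 0")
  case False
  have le: "p j \<le> p j'" if "1 \<le> j" "j \<le> j'" "j' \<le> n" for j j'
  proof (rule lift_Suc_mono_le_ivl[where N = "{1..<n}"])
    show "\<And>k. k \<in> {1..<n} \<Longrightarrow> p k \<le> p (Suc k)"
      using mono by simp
  qed (use that in auto)
  define A where "A = (\<Sum>j=1..b. p j)"
  define R where "R = (\<Sum>j=b+1..n. p j)"
  have total: "(\<Sum>j=1..n. p j) = A + R"
    unfolding A_def R_def using sum.ub_add_nat[of 1 b p "n - b"] \<open>b \<le> n\<close> False by simp
  have "A \<le> real b * p b"
    unfolding A_def using sum_bounded_above[of "{1..b}" p "p b"] le \<open>b \<le> n\<close> by auto
  have "real (n - b) * p b \<le> R"
    unfolding R_def using sum_bounded_below[of "{b+1..n}" "p b" p] le False by auto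
  have "real n * A = real (n - b) * A + real b * A"
    using \<open>b \<le> n\<close> by (simp add: left_diff_distrib)
  also have "real (n - b) * A \<le> real b * (real (n - b) * p b)"
    using mult_left_mono[OF \<open>A \<le> real b * p b\<close>, of "real (n - b)"] by (simp add: mult_ac)
  also have "\<dots> \<le> real b * R"
    using \<open>real (n - b) * p b \<le> R\<close> by (simp add: mult_left_mono)
  finally show ?thesis
    unfolding total A_def[symmetric] by (simp add: distrib_left)
qed simp

text \<open>Summing \<open>p\<close> cyclically over \<open>M\<close> consecutive indices: full periods contribute \<open>1\<close>, and a
  partial period of length \<open>r\<close> uses the \<open>r\<close> smallest probabilities, so contributes at most \<open>r/n\<close>.\<close>

lemma cyclic_sum_le:
  fixes p :: "nat \<Rightarrow> real"
  assumes "1 \<le> n" and mono: "\<forall>j. 1 \<le> j \<and> j < n \<longrightarrow> p j \<le> p (Suc j)"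
    and sum1: "(\<Sum>j=1..n. p j) = 1"
  shows "real n * (\<Sum>j<M. p (j mod n + 1)) \<le> real M"
proof (induction M rule: less_induct)
  case (less M)
  have prefix: "(\<Sum>j<r. p (j mod n + 1)) = (\<Sum>j=1..r. p j)" if "r \<le> n" for r
  proof -
    have "(\<Sum>j<r. p (j mod n + 1)) = (\<Sum>j<r. p (Suc j))"
      using that by (intro sum.cong) auto
    then show ?thesis
      by (simp add: sum.atLeast1_atMost_eq)
  qed
  show ?case
  proof (cases "M < n")
    case True
    then show ?thesis
      using prefix[of M] sorted_prefix_sum_le[OF mono, of M] sum1 by simp
  next
    case False
    then obtain M' where M: "M = n + M'"
      using le_Suc_ex not_less by blast
    have "(\<Sum>j<n + M'. p (j mod n + 1)) = (\<Sum>j<n. p (j mod n + 1)) + (\<Sum>j<M'. p ((n + j) mod n + 1))"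
      by (induction M') (simp_all add: add.assoc)
    then have "(\<Sum>j<M. p (j mod n + 1)) = 1 + (\<Sum>j<M'. p (j mod n + 1))"
      using prefix[of n] sum1 M by simp
    moreover have "real n * (\<Sum>j<M'. p (j mod n + 1)) \<le> real M'"
      using less M \<open>1 \<le> n\<close> by simp
    ultimately show ?thesis
      using M by (simp add: algebra_simps)
  qed
qed

text \<open>The value at \<open>q = 0\<close> is chosen so that both \<open>q * w \<le> 1\<close> and \<open>w \<ge> 2n - n\<^sup>2 q\<close> hold.\<close>

definition inv_weight :: "nat \<Rightarrow> real \<Rightarrow> real" where
  "inv_weight n q = (if 0 < q then 1 / q else 2 * real n)"

text \<open>Advancing from \<open>j\<close> to \<open>j + 1\<close> requires sampling index \<open>j mod n + 1\<close>; the potential charges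
  the inverse of its probability, so that its expected increase per step is at most \<open>1\<close>.\<close>

definition potential :: "nat \<Rightarrow> (nat \<Rightarrow> real) \<Rightarrow> nat \<Rightarrow> nat \<Rightarrow> real" where
  "potential n p M k = (\<Sum>j<min k M. inv_weight n (p (j mod n + 1)))"

lemma inv_weight_nonneg: "0 \<le> inv_weight n q"
  unfolding inv_weight_def by auto

lemma mult_inv_weight_le: "0 \<le> q \<Longrightarrow> q * inv_weight n q \<le> 1"
  unfolding inv_weight_def by auto

lemma inv_weight_ge:
  assumes "0 \<le> q"
  shows "2 * real n - (real n)\<^sup>2 * q \<le> inv_weight n q"
proof (cases "0 < q")
  case True
  have "0 \<le> (real n * q - 1)\<^sup>2"
    by simp
  then have "(2 * real n - (real n)\<^sup>2 * q) * q \<le> 1"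
    by (simp add: power2_eq_square algebra_simps)
  then show ?thesis
    unfolding inv_weight_def using True by (simp add: field_simps)
qed (use assms in \<open>simp add: inv_weight_def\<close>)

lemma potential_Suc:
  "potential n p M (Suc k) = potential n p M k + (if k < M then inv_weight n (p (k mod n + 1)) else 0)"
  unfolding potential_def by (cases "k < M") (simp_all add: min_def)

lemma potential_drift:
  assumes "1 \<le> n" and p: "\<forall>j\<in>{1..n}. 0 \<le> p j" "(\<Sum>j=1..n. p j) = 1"
  shows "(\<Sum>i=1..n. p i * potential n p M (progress_step n k i)) \<le> potential n p M k + 1"
proof -
  define i\<^sub>0 where "i\<^sub>0 = k mod n + 1"
  define d where "d = potential n p M (Suc k) - potential n p M k"
  have i\<^sub>0: "i\<^sub>0 \<in> {1..n}"
    unfolding i\<^sub>0_def using \<open>1 \<le> n\<close> by (simp add: Suc_leI)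
  have "(\<Sum>i=1..n. p i * potential n p M (progress_step n k i))
      = (\<Sum>i=1..n. p i * potential n p M k + (if i = i\<^sub>0 then p i * d else 0))"
    by (intro sum.cong) (auto simp: progress_step_def i\<^sub>0_def d_def algebra_simps)
  also have "\<dots> = potential n p M k + p i\<^sub>0 * d"
    using i\<^sub>0 p(2) by (simp add: sum.distrib sum_distrib_right[symmetric] mult.commute)
  also have "p i\<^sub>0 * d \<le> 1"
    unfolding d_def potential_Suc i\<^sub>0_def[symmetric] using p(1) i\<^sub>0 mult_inv_weight_le by auto
  finally show ?thesis
    by simp
qed

lemma potential_ge:
  assumes "1 \<le> n" and p: "\<forall>j\<in>{1..n}. 0 \<le> p j" "(\<Sum>j=1..n. p j) = 1"
    and mono: "\<forall>j. 1 \<le> j \<and> j < n \<longrightarrow> p j \<le> p (Suc j)"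
  shows "real n * real M \<le> potential n p M M"
proof -
  have nonneg: "0 \<le> p (j mod n + 1)" for j
    using p(1) \<open>1 \<le> n\<close> by (simp add: Suc_leI)
  have "2 * real n * real M - real n * (real n * (\<Sum>j<M. p (j mod n + 1)))
      = (\<Sum>j<M. 2 * real n - (real n)\<^sup>2 * p (j mod n + 1))"
    by (simp add: sum_subtractf sum_distrib_left power2_eq_square algebra_simps)
  also have "\<dots> \<le> potential n p M M"
    unfolding potential_def min.idem by (intro sum_mono inv_weight_ge nonneg)
  moreover have "real n * (real n * (\<Sum>j<M. p (j mod n + 1))) \<le> real n * real M"
    using cyclic_sum_le[OF \<open>1 \<le> n\<close> mono p(2), of M] by (simp add: mult_left_mono)
  ultimately show ?thesis
    by linarith
qed

lemma prob_progress_reaches_le: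
  assumes "1 \<le> n" and p: "\<forall>j\<in>{1..n}. 0 \<le> p j" "(\<Sum>j=1..n. p j) = 1"
    and mono: "\<forall>j. 1 \<le> j \<and> j < n \<longrightarrow> p j \<le> p (Suc j)"
  shows "seq_expect n p t (\<lambda>s. of_bool (M \<le> progress n s)) * (real n * real M) \<le> real t"
proof -
  have "seq_expect n p t (\<lambda>s. of_bool (M \<le> progress n s)) * (real n * real M)
      = seq_expect n p t (\<lambda>s. (real n * real M) * of_bool (M \<le> progress n s))"
    unfolding seq_expect_cmult by simp
  also have "\<dots> \<le> seq_expect n p t (\<lambda>s. potential n p M (progress n s))"
  proof (intro seq_expect_mono[OF p(1)])
    fix s
    show "real n * real M * of_bool (M \<le> progress n s) \<le> potential n p M (progress n s)"
    proof (cases "M \<le> progress n s")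
      case True
      then have "potential n p M (progress n s) = potential n p M M"
        unfolding potential_def by (simp add: min_absorb2)
      then show ?thesis
        using True potential_ge[OF assms] by simp
    qed (simp add: potential_def sum_nonneg inv_weight_nonneg)
  qed
  also have "\<dots> \<le> potential n p M 0 + 1 * real t"
    unfolding progress_def using p by (intro seq_expect_foldl_le potential_drift \<open>1 \<le> n\<close>)
  finally show ?thesis
    by (simp add: potential_def)
qed

section \<open>Coordinate subspaces\<close>

text \<open>For bijective \<open>ix\<close>, \<open>tail_space ix k\<close> consists of the vectors supported on the last \<open>k\<close>
  coordinates, i.e. it is \<open>\<F>\<^sub>k\<close>; \<open>tail_proj ix k\<close> is the orthogonal projection onto it.\<close>

definition head_coords :: "(nat \<Rightarrow> 'm::finite) \<Rightarrow> nat \<Rightarrow> 'm set" where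
  "head_coords ix k = ix ` {1..CARD('m) - k}"

definition tail_space :: "(nat \<Rightarrow> 'm::finite) \<Rightarrow> nat \<Rightarrow> (real^'m) set" where
  "tail_space ix k = {y. \<forall>c\<in>head_coords ix k. y $ c = 0}"

definition tail_proj :: "(nat \<Rightarrow> 'm::finite) \<Rightarrow> nat \<Rightarrow> real^'m \<Rightarrow> real^'m" where
  "tail_proj ix k y = (\<chi> c. if c \<in> head_coords ix k then 0 else y $ c)"

lemma subspace_tail_space: "subspace (tail_space ix k)"
  unfolding subspace_def tail_space_def by auto

lemma tail_space_mono: "k \<le> k' \<Longrightarrow> tail_space ix k \<subseteq> tail_space ix k'"
  unfolding tail_space_def head_coords_def by auto

lemma tail_proj_in_tail_space: "tail_proj ix k y \<in> tail_space ix k"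
  unfolding tail_space_def tail_proj_def by simp

lemma tail_proj_eq_self: "y \<in> tail_space ix k \<Longrightarrow> tail_proj ix k y = y"
  unfolding tail_space_def tail_proj_def by (simp add: vec_eq_iff)

lemma tail_proj_diff: "tail_proj ix k (x - y) = tail_proj ix k x - tail_proj ix k y"
  unfolding tail_proj_def by (simp add: vec_eq_iff)

lemma norm_tail_proj_le: "norm (tail_proj ix k y) \<le> norm y"
  unfolding tail_proj_def by (rule norm_le_componentwise_cart) simp

lemma ix_in_head_coords_iff:
  assumes "inj_on ix {1..CARD('m)}" and "j \<in> {1..CARD('m)}"
  shows "(ix j :: 'm::finite) \<in> head_coords ix k \<longleftrightarrow> j + k \<le> CARD('m)"
proof -
  have "ix j \<in> ix ` {1..CARD('m) - k} \<longleftrightarrow> j \<in> {1..CARD('m) - k}"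
    using assms by (intro inj_on_image_mem_iff) auto
  then show ?thesis
    unfolding head_coords_def using assms(2) by auto
qed

lemma tail_proj_ix:
  assumes "inj_on ix {1..CARD('m)}" and "j \<in> {1..CARD('m)}"
  shows "tail_proj ix k y $ (ix j :: 'm::finite) = (if j + k \<le> CARD('m) then 0 else y $ ix j)"
  using ix_in_head_coords_iff[OF assms] unfolding tail_proj_def by simp

lemma evec_in_tail_space:
  assumes "inj_on ix {1..CARD('m)}" and "j \<in> {1..CARD('m)}" and "CARD('m) < j + k"
  shows "evec ix j \<in> tail_space (ix :: nat \<Rightarrow> 'm::finite) k"
  unfolding tail_space_def
proof (intro CollectI ballI)
  fix c assume "c \<in> head_coords ix k"
  then obtain j' where "j' \<in> {1..CARD('m) - k}" "c = ix j'"
    unfolding head_coords_def by blast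
  moreover from this have "ix j' \<noteq> ix j"
    using assms inj_on_eq_iff[OF assms(1), of j' j] by auto
  ultimately show "evec ix j $ c = 0"
    unfolding evec_def axis_def by simp
qed

lemma tail_space_subset_Fsp:
  assumes ix: "bij_betw ix {1..CARD('m)} (UNIV :: 'm::finite set)"
  shows "tail_space ix k \<subseteq> Fsp ix k"
proof
  fix y :: "real^'m" assume y: "y \<in> tail_space ix k"
  have "y = (\<Sum>c\<in>UNIV. (y $ c) *\<^sub>R axis c 1)"
    using basis_expansion[of y] by (simp add: scalar_mult_eq_scaleR)
  also have "\<dots> = (\<Sum>j\<in>{1..CARD('m)}. (y $ ix j) *\<^sub>R evec ix j)"
    unfolding evec_def by (rule sum.reindex_bij_betw[OF ix, symmetric])
  also have "\<dots> \<in> Fsp ix k"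
    unfolding Fsp_def
  proof (rule span_sum)
    fix j assume j: "j \<in> {1..CARD('m)}"
    show "(y $ ix j) *\<^sub>R evec ix j \<in> span (evec ix ` {CARD('m) - k + 1..CARD('m)})"
    proof (cases "j + k \<le> CARD('m)")
      case True
      then have "y $ ix j = 0"
        using y j unfolding tail_space_def head_coords_def by auto
      then show ?thesis
        by (simp add: span_zero)
    next
      case False
      then show ?thesis
        using j by (intro span_mul span_base) auto
    qed
  qed
  finally show "y \<in> Fsp ix k" .
qed

lemma brow_inner:
  "brow ix \<omega> l \<bullet> (y :: real^'m::finite) =
    (if l < CARD('m) then y $ ix (CARD('m) - l + 1) - y $ ix (CARD('m) - l) else \<omega> * y $ ix 1)"
  unfolding brow_def evec_def by (simp add: inner_diff_left inner_commute[of "axis _ _"] inner_axis)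

text \<open>Row \<open>l\<close> of \<open>B\<close> couples the coordinates \<open>m - l\<close> and \<open>m - l + 1\<close>, so only row \<open>k\<close> straddles the
  boundary of \<open>\<F>\<^sub>k\<close>.\<close>

lemma brow_inner_tail_proj:
  assumes "inj_on ix {1..CARD('m)}" and "1 \<le> l" "l \<le> CARD('m)" "l \<noteq> k"
  shows "brow ix \<omega> l \<bullet> tail_proj ix k (y :: real^'m::finite) = (if l < k then brow ix \<omega> l \<bullet> y else 0)"
proof (cases "l < CARD('m)")
  case True
  then have "CARD('m) - l + 1 \<in> {1..CARD('m)}" "CARD('m) - l \<in> {1..CARD('m)}"
    using assms by auto
  with True assms show ?thesis
    unfolding brow_inner by (simp add: tail_proj_ix[OF assms(1)]) arith
next
  case False
  then have "l = CARD('m)" "1 \<in> {1..CARD('m)}"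
    using assms by auto
  with assms show ?thesis
    unfolding brow_inner by (simp add: tail_proj_ix[OF assms(1)])
qed

lemma brow_in_tail_space:
  assumes "inj_on ix {1..CARD('m)}" and "1 \<le> l" "l < k" "l \<le> CARD('m)"
  shows "brow ix \<omega> l \<in> tail_space (ix :: nat \<Rightarrow> 'm::finite) k"
proof (cases "l < CARD('m)")
  case True
  then have "evec ix (CARD('m) - l + 1) \<in> tail_space ix k" "evec ix (CARD('m) - l) \<in> tail_space ix k"
    using assms by (auto intro: evec_in_tail_space)
  then show ?thesis
    unfolding brow_def using True by (simp add: subspace_diff[OF subspace_tail_space])
next
  case False
  then have "evec ix 1 \<in> tail_space ix k"
    using assms by (intro evec_in_tail_space) auto
  then show ?thesis
    unfolding brow_def using False by (simp add: subspace_scale[OF subspace_tail_space])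
qed

lemma brow_inner_eq_0:
  assumes "inj_on ix {1..CARD('m)}" and "y \<in> tail_space ix k" "k < l" "l \<le> CARD('m)"
  shows "brow ix \<omega> l \<bullet> (y :: real^'m::finite) = 0"
  using brow_inner_tail_proj[OF assms(1), of l k \<omega> y] assms by (simp add: tail_proj_eq_self)

section \<open>Gradients of the components\<close>

definition rfun_grad :: "(nat \<Rightarrow> 'm::finite) \<Rightarrow> nat \<Rightarrow> real \<Rightarrow> real \<Rightarrow> real \<Rightarrow> real
                    \<Rightarrow> nat \<Rightarrow> real^'m \<Rightarrow> real^'m" where
  "rfun_grad ix n la0 la1 la2 \<omega> i y =
     (2 * la1) *\<^sub>R (\<Sum>l\<in>Lset CARD('m) n i. (brow ix \<omega> l \<bullet> y) *\<^sub>R brow ix \<omega> l)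
     + (2 * la2) *\<^sub>R y - (if i = 1 then la0 else 0) *\<^sub>R evec ix CARD('m)"

lemma rfun_eq_inner:
  fixes ix :: "nat \<Rightarrow> 'm::finite"
  shows "rfun ix n la0 la1 la2 \<omega> i =
    (\<lambda>y. la1 * (\<Sum>l\<in>Lset CARD('m) n i. (brow ix \<omega> l \<bullet> y)\<^sup>2) + la2 * (y \<bullet> y)
       - (if i = 1 then la0 else 0) * (evec ix CARD('m) \<bullet> y))"
  unfolding rfun_def by (simp add: power2_norm_eq_inner fun_eq_iff)

lemma has_gradient_rfun:
  fixes ix :: "nat \<Rightarrow> 'm::finite"
  shows "GDERIV (rfun ix n la0 la1 la2 \<omega> i) y :> rfun_grad ix n la0 la1 la2 \<omega> i y"
proof -
  have "(rfun ix n la0 la1 la2 \<omega> i has_derivative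
      (\<lambda>h. la1 * (\<Sum>l\<in>Lset CARD('m) n i. 2 * (brow ix \<omega> l \<bullet> y) * (brow ix \<omega> l \<bullet> h))
         + la2 * (2 * (y \<bullet> h)) - (if i = 1 then la0 else 0) * (evec ix CARD('m) \<bullet> h))) (at y)"
    unfolding rfun_eq_inner by (auto intro!: derivative_eq_intros simp: algebra_simps inner_commute)
  moreover have "(\<lambda>h. la1 * (\<Sum>l\<in>Lset CARD('m) n i. 2 * (brow ix \<omega> l \<bullet> y) * (brow ix \<omega> l \<bullet> h))
         + la2 * (2 * (y \<bullet> h)) - (if i = 1 then la0 else 0) * (evec ix CARD('m) \<bullet> h))
      = (\<lambda>h. h \<bullet> rfun_grad ix n la0 la1 la2 \<omega> i y)"
    unfolding rfun_grad_def
    by (auto simp: inner_sum_right sum_distrib_left algebra_simps inner_commute intro!: sum.cong)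
  ultimately show ?thesis
    unfolding gderiv_def by simp
qed

lemma grad_eqI:
  assumes "GDERIV g x :> D"
  shows "grad g x = D"
  unfolding grad_def
proof (rule the_equality)
  fix D' assume "GDERIV g x :> D'"
  then have "(\<lambda>h. h \<bullet> D') = (\<lambda>h. h \<bullet> D)"
    using assms unfolding gderiv_def by (rule has_derivative_unique)
  then have "(D' - D) \<bullet> D' = (D' - D) \<bullet> D"
    by metis
  then have "(D' - D) \<bullet> (D' - D) = 0"
    by (simp add: inner_diff_right)
  then show "D' = D"
    by simp
qed (fact assms)

lemma grad_rfun:
  fixes ix :: "nat \<Rightarrow> 'm::finite"
  shows "grad (rfun ix n la0 la1 la2 \<omega> i) y = rfun_grad ix n la0 la1 la2 \<omega> i y"
  by (rule grad_eqI has_gradient_rfun)+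

lemma Lset_bounds: "l \<in> Lset m n i \<Longrightarrow> 1 \<le> l \<and> l \<le> m"
  unfolding Lset_def by simp

text \<open>The two hypotheses on \<open>k'\<close> say that no row of \<open>r\<^sub>i\<close> straddles the boundary of \<open>\<F>\<^sub>k\<^sub>'\<close>
  and that the linear term of \<open>r\<^sub>1\<close> lies in \<open>\<F>\<^sub>k\<^sub>'\<close>.\<close>

lemma rfun_grad_in_tail_space:
  fixes ix :: "nat \<Rightarrow> 'm::finite"
  assumes ix: "inj_on ix {1..CARD('m)}" and y: "y \<in> tail_space ix k" and "k \<le> k'"
    and row: "k' \<notin> Lset CARD('m) n i" and lin: "i = 1 \<Longrightarrow> 1 \<le> k'"
  shows "rfun_grad ix n la0 la1 la2 \<omega> i y \<in> tail_space ix k'"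
proof -
  have S: "subspace (tail_space ix k')"
    by (rule subspace_tail_space)
  have "(brow ix \<omega> l \<bullet> y) *\<^sub>R brow ix \<omega> l \<in> tail_space ix k'" if l: "l \<in> Lset CARD('m) n i" for l
  proof (cases "l < k'")
    case True
    then show ?thesis
      using Lset_bounds[OF l] ix by (intro subspace_scale[OF S] brow_in_tail_space) auto
  next
    case False
    then have "k < l"
      using l row \<open>k \<le> k'\<close> by (cases "l = k'") auto
    then show ?thesis
      using Lset_bounds[OF l] brow_inner_eq_0[OF ix y] subspace_0[OF S] by simp
  qed
  moreover have "y \<in> tail_space ix k'"
    using y tail_space_mono[OF \<open>k \<le> k'\<close>] by blast
  moreover have "(if i = 1 then la0 else 0) *\<^sub>R evec ix CARD('m) \<in> tail_space ix k'"
    using lin ix by (auto intro!: subspace_scale[OF S] evec_in_tail_space simp: subspace_0[OF S])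
  moreover note subspace_sum[OF S, of "Lset CARD('m) n i" "\<lambda>l. (brow ix \<omega> l \<bullet> y) *\<^sub>R brow ix \<omega> l"]
  ultimately show ?thesis
    unfolding rfun_grad_def by (simp add: subspace_add[OF S] subspace_diff[OF S] subspace_scale[OF S])
qed

lemma rfun_tail_proj_le:
  fixes ix :: "nat \<Rightarrow> 'm::finite"
  assumes ix: "inj_on ix {1..CARD('m)}" and "0 \<le> la1" "0 \<le> la2"
    and row: "k \<notin> Lset CARD('m) n i" and lin: "i = 1 \<Longrightarrow> 1 \<le> k"
  shows "rfun ix n la0 la1 la2 \<omega> i (tail_proj ix k y) \<le> rfun ix n la0 la1 la2 \<omega> i y"
proof -
  have "(brow ix \<omega> l \<bullet> tail_proj ix k y)\<^sup>2 \<le> (brow ix \<omega> l \<bullet> y)\<^sup>2" if l: "l \<in> Lset CARD('m) n i" for l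
    using Lset_bounds[OF l] l row by (subst brow_inner_tail_proj[OF ix]) auto
  then have "la1 * (\<Sum>l\<in>Lset CARD('m) n i. (brow ix \<omega> l \<bullet> tail_proj ix k y)\<^sup>2)
      \<le> la1 * (\<Sum>l\<in>Lset CARD('m) n i. (brow ix \<omega> l \<bullet> y)\<^sup>2)"
    by (intro mult_left_mono sum_mono \<open>0 \<le> la1\<close>)
  moreover have "la2 * (norm (tail_proj ix k y))\<^sup>2 \<le> la2 * (norm y)\<^sup>2"
    by (intro mult_left_mono power_mono norm_tail_proj_le \<open>0 \<le> la2\<close>) simp
  moreover have "evec ix CARD('m) \<bullet> tail_proj ix k y = evec ix CARD('m) \<bullet> y" if "i = 1"
    using lin[OF that] tail_proj_ix[OF ix, of "CARD('m)" k y]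
    by (simp add: evec_def inner_commute[of "axis _ _"] inner_axis)
  ultimately show ?thesis
    unfolding rfun_def by auto
qed

lemma rfun_lower_bound:
  fixes ix :: "nat \<Rightarrow> 'm::finite"
  assumes "0 \<le> la1" "0 \<le> la2"
  shows "rfun ix n la0 la1 la2 \<omega> i 0 - \<bar>la0\<bar> * norm u \<le> rfun ix n la0 la1 la2 \<omega> i u"
proof -
  have "\<bar>evec ix CARD('m) \<bullet> u\<bar> \<le> norm u"
    using Cauchy_Schwarz_ineq2[of "evec ix CARD('m)" u] by (simp add: evec_def)
  then have "\<bar>(if i = 1 then la0 else 0) * (evec ix CARD('m) \<bullet> u)\<bar> \<le> \<bar>la0\<bar> * norm u"
    by (auto simp: abs_mult intro: mult_left_mono)
  moreover have "0 \<le> la1 * (\<Sum>l\<in>Lset CARD('m) n i. (brow ix \<omega> l \<bullet> u)\<^sup>2)" "0 \<le> la2 * (norm u)\<^sup>2"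
    using assms by (simp_all add: sum_nonneg)
  ultimately show ?thesis
    unfolding rfun_def by (auto simp: abs_le_iff)
qed

lemma continuous_on_rfun:
  fixes ix :: "nat \<Rightarrow> 'm::finite"
  shows "continuous_on S (rfun ix n la0 la1 la2 \<omega> i)"
  unfolding rfun_eq_inner by (intro continuous_intros)

lemma norm_diff_midpoint_sq:
  fixes x u v :: "'a::real_inner"
  shows "(norm (x - midpoint u v))\<^sup>2 = ((norm (x - u))\<^sup>2 + (norm (x - v))\<^sup>2) / 2 - (norm (u - v))\<^sup>2 / 4"
  unfolding power2_norm_eq_inner midpoint_def
  by (simp add: inner_diff_left inner_diff_right inner_add_left inner_add_right inner_commute field_simps)

lemma rfun_midpoint_le:
  fixes ix :: "nat \<Rightarrow> 'm::finite"
  assumes "0 \<le> la1" "0 \<le> la2"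
  shows "rfun ix n la0 la1 la2 \<omega> i (midpoint u v)
    \<le> (rfun ix n la0 la1 la2 \<omega> i u + rfun ix n la0 la1 la2 \<omega> i v) / 2"
proof -
  have sq: "((a + b) / 2)\<^sup>2 \<le> (a\<^sup>2 + b\<^sup>2) / 2" for a b :: real
    using zero_le_power2[of "a - b"] by (simp add: power2_eq_square field_simps)
  have "(brow ix \<omega> l \<bullet> midpoint u v)\<^sup>2 \<le> ((brow ix \<omega> l \<bullet> u)\<^sup>2 + (brow ix \<omega> l \<bullet> v)\<^sup>2) / 2" for l
    using sq by (simp add: midpoint_def inner_add_right)
  then have "(\<Sum>l\<in>Lset CARD('m) n i. (brow ix \<omega> l \<bullet> midpoint u v)\<^sup>2)
      \<le> ((\<Sum>l\<in>Lset CARD('m) n i. (brow ix \<omega> l \<bullet> u)\<^sup>2) + (\<Sum>l\<in>Lset CARD('m) n i. (brow ix \<omega> l \<bullet> v)\<^sup>2)) / 2"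
    by (auto intro: sum_mono simp: sum.distrib[symmetric] sum_divide_distrib)
  from mult_left_mono[OF this \<open>0 \<le> la1\<close>]
  have "la1 * (\<Sum>l\<in>Lset CARD('m) n i. (brow ix \<omega> l \<bullet> midpoint u v)\<^sup>2)
      \<le> (la1 * (\<Sum>l\<in>Lset CARD('m) n i. (brow ix \<omega> l \<bullet> u)\<^sup>2)
        + la1 * (\<Sum>l\<in>Lset CARD('m) n i. (brow ix \<omega> l \<bullet> v)\<^sup>2)) / 2"
    by (simp add: algebra_simps)
  moreover have "(norm (midpoint u v))\<^sup>2 \<le> ((norm u)\<^sup>2 + (norm v)\<^sup>2) / 2"
    using norm_diff_midpoint_sq[of 0 u v] zero_le_power2[of "norm (u - v)"]
    by (simp only: diff_0 norm_minus_cancel)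
  from mult_left_mono[OF this \<open>0 \<le> la2\<close>]
  have "la2 * (norm (midpoint u v))\<^sup>2 \<le> (la2 * (norm u)\<^sup>2 + la2 * (norm v)\<^sup>2) / 2"
    by (simp add: algebra_simps)
  moreover have "(if i = 1 then la0 * (evec ix CARD('m) \<bullet> midpoint u v) else 0)
      = ((if i = 1 then la0 * (evec ix CARD('m) \<bullet> u) else 0)
        + (if i = 1 then la0 * (evec ix CARD('m) \<bullet> v) else 0)) / 2"
    by (simp add: midpoint_def algebra_simps)
  ultimately show ?thesis
    unfolding rfun_def by argo
qed

section \<open>Proximal points\<close>

definition prox_objective :: "real \<Rightarrow> ('a::real_normed_vector \<Rightarrow> real) \<Rightarrow> 'a \<Rightarrow> 'a \<Rightarrow> real" where
  "prox_objective \<gamma> g x u = g u + (1 / (2 * \<gamma>)) * (norm (x - u))\<^sup>2"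

lemma prox_eqI:
  assumes "\<And>v. prox_objective \<gamma> g x u \<le> prox_objective \<gamma> g x v"
    and "\<And>w. (\<And>v. prox_objective \<gamma> g x w \<le> prox_objective \<gamma> g x v) \<Longrightarrow> w = u"
  shows "prox \<gamma> g x = u"
  unfolding prox_def using assms unfolding prox_objective_def by (intro the_equality) blast+

lemma prox_minimizer_unique:
  fixes g :: "'a::real_inner \<Rightarrow> real"
  assumes "0 < \<gamma>" and convex: "\<And>u v. g (midpoint u v) \<le> (g u + g v) / 2"
    and u: "\<And>v. prox_objective \<gamma> g x u \<le> prox_objective \<gamma> g x v"
    and w: "\<And>v. prox_objective \<gamma> g x w \<le> prox_objective \<gamma> g x v"
  shows "w = u"
proof -
  define a where "a = 1 / (2 * \<gamma>)"
  have "0 < a"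
    unfolding a_def using \<open>0 < \<gamma>\<close> by simp
  have "prox_objective \<gamma> g x (midpoint u w)
      \<le> (prox_objective \<gamma> g x u + prox_objective \<gamma> g x w) / 2 - a * (norm (u - w))\<^sup>2 / 4"
    using convex[of u w] unfolding prox_objective_def norm_diff_midpoint_sq a_def[symmetric]
    by (simp add: field_simps)
  moreover have "prox_objective \<gamma> g x u \<le> prox_objective \<gamma> g x (midpoint u w)"
    "prox_objective \<gamma> g x w \<le> prox_objective \<gamma> g x (midpoint u w)"
    using u w by blast+
  ultimately have "a * (norm (u - w))\<^sup>2 \<le> 0"
    by argo
  then show ?thesis
    using \<open>0 < a\<close> by (simp add: mult_le_0_iff)
qed

text \<open>Outside a large ball the quadratic penalty beats the linear lower bound on \<open>g\<close>, so the
  infimum over that compact ball is global.\<close>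

lemma prox_minimizer_exists:
  fixes g :: "'a::euclidean_space \<Rightarrow> real"
  assumes "0 < \<gamma>" and "continuous_on UNIV g" and "0 \<le> L" and lower: "\<And>u. g 0 - L * norm u \<le> g u"
  shows "\<exists>u. \<forall>v. prox_objective \<gamma> g x u \<le> prox_objective \<gamma> g x v"
proof -
  define a where "a = 1 / (2 * \<gamma>)"
  define R where "R = 2 * norm x + L / a"
  let ?H = "prox_objective \<gamma> g x"
  have "0 < a" "0 \<le> R"
    unfolding a_def R_def using assms by auto
  have "continuous_on (cball 0 R) ?H"
    unfolding prox_objective_def
    by (intro continuous_intros continuous_on_subset[OF \<open>continuous_on UNIV g\<close>]) auto
  then obtain u where u: "u \<in> cball 0 R" "\<And>v. v \<in> cball 0 R \<Longrightarrow> ?H u \<le> ?H v"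
    using continuous_attains_inf[of "cball 0 R" ?H] \<open>0 \<le> R\<close> by auto
  have far: "?H 0 < ?H v" if "v \<notin> cball 0 R" for v
  proof -
    have "R < norm v"
      using that by simp
    then have "0 < a * norm v * (norm v - R)"
      using \<open>0 < a\<close> \<open>0 \<le> R\<close> by (intro mult_pos_pos) auto
    moreover have "a * norm v * (norm v - R) = a * (norm v - norm x)\<^sup>2 - L * norm v - a * (norm x)\<^sup>2"
      unfolding R_def using \<open>0 < a\<close> by (simp add: power2_eq_square field_simps)
    ultimately have "a * (norm x)\<^sup>2 < a * (norm v - norm x)\<^sup>2 - L * norm v"
      by linarith
    also have "(norm v - norm x)\<^sup>2 \<le> (norm (x - v))\<^sup>2"
      using norm_triangle_ineq3[of v x] by (simp add: abs_le_square_iff[symmetric] norm_minus_commute)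
    finally show ?thesis
      using lower[of v] \<open>0 < a\<close> unfolding prox_objective_def a_def[symmetric] by simp
  qed
  have "?H u \<le> ?H v" for v
  proof (cases "v \<in> cball 0 R")
    case False
    have "?H u \<le> ?H 0"
      using u(2) \<open>0 \<le> R\<close> by simp
    with far[OF False] show ?thesis
      by simp
  qed (rule u(2))
  then show ?thesis
    by blast
qed

lemma prox_rfun_iff:
  fixes ix :: "nat \<Rightarrow> 'm::finite"
  assumes "0 < \<gamma>" "0 \<le> la1" "0 \<le> la2"
  shows "prox \<gamma> (rfun ix n la0 la1 la2 \<omega> i) x = u
    \<longleftrightarrow> (\<forall>v. prox_objective \<gamma> (rfun ix n la0 la1 la2 \<omega> i) x u \<le> prox_objective \<gamma> (rfun ix n la0 la1 la2 \<omega> i) x v)"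
proof -
  let ?r = "rfun ix n la0 la1 la2 \<omega> i"
  have convex: "\<And>u v. ?r (midpoint u v) \<le> (?r u + ?r v) / 2"
    by (rule rfun_midpoint_le[OF assms(2,3)])
  have lower: "\<And>u. ?r 0 - \<bar>la0\<bar> * norm u \<le> ?r u"
    by (rule rfun_lower_bound[OF assms(2,3)])
  have unique: "w = w'" if "\<And>v. prox_objective \<gamma> ?r x w' \<le> prox_objective \<gamma> ?r x v"
    "\<And>v. prox_objective \<gamma> ?r x w \<le> prox_objective \<gamma> ?r x v" for w w'
    by (rule prox_minimizer_unique[OF \<open>0 < \<gamma>\<close> convex that])
  obtain u\<^sub>0 where u\<^sub>0: "\<And>v. prox_objective \<gamma> ?r x u\<^sub>0 \<le> prox_objective \<gamma> ?r x v"
    using prox_minimizer_exists[OF \<open>0 < \<gamma>\<close> continuous_on_rfun abs_ge_zero lower] by blast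
  then have "prox \<gamma> ?r x = u\<^sub>0"
    using unique by (intro prox_eqI) blast+
  then show ?thesis
    using u\<^sub>0 unique by blast
qed

text \<open>Projecting onto \<open>\<F>\<^sub>k\<close> lowers \<open>r\<^sub>i\<close> and does not increase the distance to \<open>x \<in> \<F>\<^sub>k\<close>, so by
  uniqueness the proximal point is its own projection.\<close>

lemma prox_rfun_in_tail_space:
  fixes ix :: "nat \<Rightarrow> 'm::finite"
  assumes ix: "inj_on ix {1..CARD('m)}" and "0 < \<gamma>" "0 \<le> la1" "0 \<le> la2"
    and x: "x \<in> tail_space ix k"
    and row: "k \<notin> Lset CARD('m) n i" and lin: "i = 1 \<Longrightarrow> 1 \<le> k"
  shows "prox \<gamma> (rfun ix n la0 la1 la2 \<omega> i) x \<in> tail_space ix k"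
proof -
  let ?r = "rfun ix n la0 la1 la2 \<omega> i"
  define u where "u = prox \<gamma> ?r x"
  have u: "\<forall>v. prox_objective \<gamma> ?r x u \<le> prox_objective \<gamma> ?r x v"
    using prox_rfun_iff[OF assms(2-4)] u_def by blast
  have "norm (x - tail_proj ix k u) \<le> norm (x - u)"
    using norm_tail_proj_le[of ix k "x - u"] by (simp add: tail_proj_diff tail_proj_eq_self[OF x])
  then have "prox_objective \<gamma> ?r x (tail_proj ix k u) \<le> prox_objective \<gamma> ?r x u"
    unfolding prox_objective_def using \<open>0 < \<gamma>\<close> rfun_tail_proj_le[OF ix assms(3,4) row lin]
    by (intro add_mono mult_left_mono power_mono) auto
  then have "prox \<gamma> ?r x = tail_proj ix k u"
    using u prox_rfun_iff[OF assms(2-4)] by (meson order_trans)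
  then show ?thesis
    using tail_proj_in_tail_space[of ix k u] by (simp add: u_def)
qed

lemma progress_step_notin_Lset:
  assumes "2 \<le> n" and "i \<in> {1..n}"
  shows "progress_step n k i \<notin> Lset m n i"
proof
  assume "progress_step n k i \<in> Lset m n i"
  then have "progress_step n k i mod n = i - 1"
    using assms unfolding Lset_def by auto
  moreover have "Suc k mod n \<noteq> k mod n"
    using \<open>2 \<le> n\<close> by (simp add: mod_Suc)
  ultimately show False
    unfolding progress_step_def by (auto split: if_splits)
qed

lemma oracle_outputs_in_tail_space:
  fixes ix :: "nat \<Rightarrow> 'm::finite"
  assumes ix: "inj_on ix {1..CARD('m)}" and "2 \<le> n" "i \<in> {1..n}" "0 \<le> la1" "0 \<le> la2" "0 < \<gamma>"
    and y: "y \<in> tail_space ix k"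
  shows "grad (rfun ix n la0 la1 la2 \<omega> i) y \<in> tail_space ix (progress_step n k i)"
    and "prox \<gamma> (rfun ix n la0 la1 la2 \<omega> i) y \<in> tail_space ix (progress_step n k i)"
proof -
  note row = progress_step_notin_Lset[OF assms(2,3)]
  have lin: "1 \<le> progress_step n k i" if "i = 1"
    using that progress_step_1_pos by simp
  show "grad (rfun ix n la0 la1 la2 \<omega> i) y \<in> tail_space ix (progress_step n k i)"
    unfolding grad_rfun using rfun_grad_in_tail_space[OF ix y le_progress_step row lin] .
  have "y \<in> tail_space ix (progress_step n k i)"
    using y tail_space_mono[OF le_progress_step] by blast
  then show "prox \<gamma> (rfun ix n la0 la1 la2 \<omega> i) y \<in> tail_space ix (progress_step n k i)"
    using prox_rfun_in_tail_space[OF ix assms(6,4,5) _ row lin] by blast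
qed

lemma PIFO_iterate_in_tail_space:
  fixes ix :: "nat \<Rightarrow> 'm::finite"
  assumes ix: "inj_on ix {1..CARD('m)}" and "2 \<le> n" "0 \<le> la1" "0 \<le> la2"
    and alg: "PIFO (rfun ix n la0 la1 la2 \<omega>) n \<gamma> x"
  shows "set s \<subseteq> {1..n} \<Longrightarrow> x s \<in> tail_space ix (progress n s)"
proof (induction s rule: length_induct)
  case (1 s)
  let ?F = "rfun ix n la0 la1 la2 \<omega>" and ?T = "tail_space ix (progress n s)"
  let ?G = "(\<lambda>k. x (take k s)) ` {..<length s}
        \<union> (\<lambda>k. grad (?F (s ! k)) (x (take k s))) ` {..<length s}
        \<union> (\<lambda>k. prox (\<gamma> (Suc k)) (?F (s ! k)) (x (take k s))) ` {..<length s}"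
  have x0: "x [] = 0" and \<gamma>: "\<forall>t\<ge>1. 0 < \<gamma> t"
    and span: "\<forall>s. s \<noteq> [] \<and> set s \<subseteq> {1..n} \<longrightarrow> x s \<in> span ((\<lambda>k. x (take k s)) ` {..<length s}
        \<union> (\<lambda>k. grad (?F (s ! k)) (x (take k s))) ` {..<length s}
        \<union> (\<lambda>k. prox (\<gamma> (Suc k)) (?F (s ! k)) (x (take k s))) ` {..<length s})"
    using alg unfolding PIFO_def by argo+
  have "x (take k s) \<in> ?T \<and> grad (?F (s ! k)) (x (take k s)) \<in> ?T
      \<and> prox (\<gamma> (Suc k)) (?F (s ! k)) (x (take k s)) \<in> ?T" if k: "k < length s" for k
  proof -
    let ?k = "progress n (take k s)"
    have "set (take k s) \<subseteq> {1..n}"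
      using 1(2) set_take_subset by (rule order_trans[rotated])
    then have xk: "x (take k s) \<in> tail_space ix ?k"
      using 1(1) k by simp
    have "s ! k \<in> {1..n}"
      using 1(2) nth_mem[OF k] by blast
    note step = oracle_outputs_in_tail_space[OF ix assms(2) this assms(3,4) _ xk, of "\<gamma> (Suc k)"]
    have "progress_step n ?k (s ! k) \<le> progress n s"
      using progress_take_le[of n "Suc k" s] k by (simp add: take_Suc_conv_app_nth progress_snoc)
    then have "tail_space ix (progress_step n ?k (s ! k)) \<subseteq> ?T"
      by (rule tail_space_mono)
    moreover have "tail_space ix ?k \<subseteq> ?T"
      by (intro tail_space_mono progress_take_le)
    ultimately show ?thesis
      using xk step \<gamma> by auto
  qed
  then have "?G \<subseteq> ?T"
    by auto
  show ?case
  proof (cases "s = []")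
    case False
    then have "x s \<in> span ?G"
      using span 1(2) by blast
    moreover have "span ?G \<subseteq> ?T"
      by (rule span_minimal[OF \<open>?G \<subseteq> ?T\<close> subspace_tail_space])
    ultimately show ?thesis
      by blast
  qed (simp add: x0 subspace_0[OF subspace_tail_space])
qed

theorem lemma2p5:
  fixes ix :: "nat \<Rightarrow> 'm::finite"
    and n M :: nat and la0 la1 la2 \<omega> \<epsilon> fstar :: real
    and p \<gamma> :: "nat \<Rightarrow> real" and x :: "nat list \<Rightarrow> real^'m"
  defines "f \<equiv> (\<lambda>y. (1 / real n) * (\<Sum>i=1..n. rfun ix n la0 la1 la2 \<omega> i y))"
  assumes ix: "bij_betw ix {1..CARD('m)} UNIV"
    and n: "n \<ge> 2" and l0: "la0 \<noteq> 0" and l1: "la1 > 0" and l2: "la2 \<ge> 0"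
    and fmin: "\<exists>xs. f xs = fstar \<and> (\<forall>y. fstar \<le> f y)"
    and p_nonneg: "\<forall>j\<in>{1..n}. p j \<ge> 0" and p_sum: "(\<Sum>j=1..n. p j) = 1"
    and p_mono: "\<forall>j. 1 \<le> j \<and> j < n \<longrightarrow> p j \<le> p (Suc j)"
    and alg: "PIFO (rfun ix n la0 la1 la2 \<omega>) n \<gamma> x"
    and eps: "\<epsilon> > 0"
    and M: "1 \<le> M" "M \<le> CARD('m)"
    and gap: "(INF y\<in>Fsp ix M. f y) - fstar \<ge> 9 * \<epsilon>"
  shows "\<forall>t::nat. real t \<le> real n * (real M + 1) / 4 \<longrightarrow>
           expect_iter n p x f t - fstar \<ge> \<epsilon>"
proof (intro allI impI)
  fix t :: nat assume t: "real t \<le> real n * (real M + 1) / 4"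
  have "1 \<le> n" "0 \<le> la1"
    using n l1 by simp_all
  have lower: "fstar \<le> f y" for y
    using fmin by blast
  define P where "P = seq_expect n p t (\<lambda>s. of_bool (M \<le> progress n s))"
  have "real n * 1 \<le> real n * real M"
    using M(1) by (intro mult_left_mono) simp_all
  then have "P * (real n * real M) \<le> 1 / 2 * (real n * real M)"
    using prob_progress_reaches_le[OF \<open>1 \<le> n\<close> p_nonneg p_sum p_mono, of t M] t
    unfolding P_def by (simp add: distrib_left)
  then have "P \<le> 1 / 2"
    using n M(1) by simp
  have "fstar + 9 * \<epsilon> \<le> f (x s)" if "s \<in> index_seqs n t" "\<not> M \<le> progress n s" for s
  proof -
    have "x s \<in> tail_space ix (progress n s)"
      using that(1) PIFO_iterate_in_tail_space[OF bij_betw_imp_inj_on[OF ix] n \<open>0 \<le> la1\<close> l2 alg]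
      unfolding index_seqs_def by blast
    then have "x s \<in> Fsp ix M"
      using tail_space_mono[of "progress n s" M ix] tail_space_subset_Fsp[OF ix] that(2) by auto
    then have "(INF y\<in>Fsp ix M. f y) \<le> f (x s)"
      using lower by (intro cINF_lower bdd_belowI2) auto
    then show ?thesis
      using gap by simp
  qed
  then have "fstar + 9 * \<epsilon> * (1 - P) \<le> expect_iter n p x f t"
    unfolding P_def expect_iter_eq_seq_expect
    using lower eps by (intro seq_expect_ge_gap[OF p_nonneg p_sum]) auto
  moreover have "\<epsilon> \<le> 9 * \<epsilon> * (1 - P)"
    using mult_left_mono[OF \<open>P \<le> 1 / 2\<close>, of \<epsilon>] eps by (simp add: algebra_simps)
  ultimately show "\<epsilon> \<le> expect_iter n p x f t - fstar"
    by linarith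
qed

end
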